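(* Let $m,d\geq 1$ be integers and let $f:[0,4]\to\mathbb{R}$ be continuous on $[0,4]$ and $(2m-1)$ times differentiable on $(0,4)$, with $f^{(2m-1)}$ concave on $(0,4)$. Let $\omega_N=\{\mathbf{x}_1,\ldots,\mathbf{x}_N\}\subset S^d$ be a strongly $m$-sharp configuration. Then the potential $$p_f(\mathbf{x},\omega_N)=\sum_{i=1}^N f(|\mathbf{x}-\mathbf{x}_i|^2),\qquad \mathbf{x}\in S^d,$$ attains its absolute maximum over $S^d$ at every point of $\omega_N$. If moreover $f^{(2m-1)}$ is strictly concave on $(0,4)$, then every point of $S^d$ at which $p_f(\cdot,\omega_N)$ attains its absolute maximum over $S^d$ belongs to $\omega_N$.
   Context: $S^d=\{\mathbf{x}\in\mathbb{R}^{d+1}:|\mathbf{x}|=1\}$, with $|\cdot|$ the Euclidean norm; $\sigma_d$ is the normalized (probability) surface area measure on $S^d$. A finite configuration $\omega_N=\{\mathbf{x}_1,\dots,\mathbf{x}_N\}\subset S^d$ is a spherical $n$-design if $\frac1N\sum_{i=1}^N p(\mathbf{x}_i)=\int_{S^d}p\,d\sigma_d$ for every polynomial $p$ on $\mathbb{R}^{d+1}$ of degree at most $n$. A configuration of $N$ distinct points $\omega_N\subset S^d$ is $m$-sharp if it is a spherical $(2m-1)$-design and exactly $m$ distinct values occur as dot products $\mathbf{x}\cdot\mathbf{y}$ of distinct points $\mathbf{x},\mathbf{y}\in\omega_N$; it is strongly $m$-sharp if it is $m$-sharp and is also a spherical $2m$-design. *)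

theory Defs
  imports "HOL-Analysis.Analysis"
begin

text \<open>Points of R^(d+1) are vectors of type real^'n with CARD('n) = d + 1.\<close>

definition poly_deg_le :: "nat \<Rightarrow> (real^'n \<Rightarrow> real) \<Rightarrow> bool" where
  "poly_deg_le n p \<longleftrightarrow>
     (\<exists>A :: ('n \<Rightarrow> nat) set. \<exists>c :: ('n \<Rightarrow> nat) \<Rightarrow> real.
        finite A \<and> (\<forall>\<alpha>\<in>A. (\<Sum>i\<in>UNIV. \<alpha> i) \<le> n) \<and>
        (\<forall>x. p x = (\<Sum>\<alpha>\<in>A. c \<alpha> * (\<Prod>i\<in>UNIV. (x $ i) ^ (\<alpha> i)))))"

text \<open>Integral against the normalized surface measure sigma_d on the unit sphere,
  realised as the normalized cone measure: integrate g(x/|x|) over the unit ball and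
  divide by the volume of the ball.\<close>
definition sphere_mean :: "(real^'n \<Rightarrow> real) \<Rightarrow> real" where
  "sphere_mean g = integral (ball 0 1) (\<lambda>x. g (x /\<^sub>R norm x)) / measure lebesgue (ball (0::real^'n) 1)"

definition spherical_design :: "nat \<Rightarrow> (real^'n) set \<Rightarrow> bool" where
  "spherical_design n \<omega> \<longleftrightarrow>
     finite \<omega> \<and> \<omega> \<noteq> {} \<and> \<omega> \<subseteq> sphere 0 1 \<and>
     (\<forall>p. poly_deg_le n p \<longrightarrow> (\<Sum>x\<in>\<omega>. p x) / real (card \<omega>) = sphere_mean p)"

definition sharp :: "nat \<Rightarrow> (real^'n) set \<Rightarrow> bool" where
  "sharp m \<omega> \<longleftrightarrow> spherical_design (2*m - 1) \<omega> \<and>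
     card {x \<bullet> y | x y. x \<in> \<omega> \<and> y \<in> \<omega> \<and> x \<noteq> y} = m"

definition strongly_sharp :: "nat \<Rightarrow> (real^'n) set \<Rightarrow> bool" where
  "strongly_sharp m \<omega> \<longleftrightarrow> sharp m \<omega> \<and> spherical_design (2*m) \<omega>"

definition strictly_concave_on :: "real set \<Rightarrow> (real \<Rightarrow> real) \<Rightarrow> bool" where
  "strictly_concave_on S g \<longleftrightarrow>
     (\<forall>x\<in>S. \<forall>y\<in>S. \<forall>t. x \<noteq> y \<and> 0 < t \<and> t < 1 \<longrightarrow>
        (1 - t) * g x + t * g y < g ((1 - t) * x + t * y))"

definition potential :: "(real \<Rightarrow> real) \<Rightarrow> (real^'n) set \<Rightarrow> real^'n \<Rightarrow> real" where
  "potential f \<omega> x = (\<Sum>y\<in>\<omega>. f ((norm (x - y))\<^sup>2))"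

end

theory Submission
  imports Defs
begin

text \<open>
  For unit vectors, \<open>|x - y|\<^sup>2 = 2 - 2 x \<bullet> y\<close>, and the squared distances between distinct
  points of a strongly \<open>m\<close>-sharp configuration form a set \<open>R\<close> of \<open>m\<close> numbers in \<open>(0, 4]\<close>.
  Fix \<open>y\<close> on the sphere and let \<open>H\<close> be the Hermite interpolant of \<open>f\<close> with a simple node
  at \<open>0\<close> and double nodes at \<open>R\<close>, a polynomial of degree \<open>2m\<close>. Its remainder
  \<open>f - H\<close> is a nonpositive multiple of the node polynomial: applying Rolle's theorem
  \<open>2m - 1\<close> times makes the \<open>(2m - 1)\<close>-th derivative of \<open>f\<close> agree with a quadratic at
  three points, and concavity forces the leading coefficient of that quadratic, a positive multiple of
  the remainder factor, to be \<open>\<le> 0\<close>. Hence \<open>f \<le> H\<close> at all squared distances from \<open>y\<close>.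
  As \<open>\<omega>\<close> is a \<open>2m\<close>-design and the normalised surface measure is rotation invariant,
  \<open>\<Sum>x\<in>\<omega>. H |y - x|\<^sup>2\<close> does not depend on \<open>y\<close>; at a point of \<open>\<omega>\<close> all squared distances
  are nodes, so there the sum is the potential. For strictness, a point \<open>y \<notin> \<omega>\<close> has a
  squared distance to \<open>\<omega>\<close> outside \<open>R \<union> {0}\<close>: otherwise the degree \<open>2m\<close> polynomial
  \<open>\<Prod>d\<in>R. (t - d)\<^sup>2\<close> would sum to \<open>0\<close> at \<open>y\<close> but not at a point of \<open>\<omega>\<close>.
\<close>

section \<open>Rotation invariance of zonal means\<close>

text \<open>The change-of-variables theorems of HOL-Analysis need a well-ordered index type;
  integrals over \<open>real^'n\<close> are transported to this copy of \<open>'n\<close>.\<close>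

typedef 'n wellordered = "UNIV :: 'n set" by simp

instance wellordered :: (finite) finite
  by standard (simp add: type_definition.univ[OF type_definition_wellordered])

instantiation wellordered :: (finite) linorder
begin

definition less_eq_wellordered :: "'a wellordered \<Rightarrow> 'a wellordered \<Rightarrow> bool"
  where "x \<le> y \<longleftrightarrow> to_nat (Rep_wellordered x) \<le> to_nat (Rep_wellordered y)"

definition less_wellordered :: "'a wellordered \<Rightarrow> 'a wellordered \<Rightarrow> bool"
  where "x < y \<longleftrightarrow> to_nat (Rep_wellordered x) < to_nat (Rep_wellordered y)"

instance
proof
  fix x y :: "'a wellordered"
  assume "x \<le> y" "y \<le> x"
  then show "x = y"
    by (simp add: less_eq_wellordered_def Rep_wellordered_inject)
qed (auto simp: less_eq_wellordered_def less_wellordered_def)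

end

instance wellordered :: (finite) wellorder
proof (rule wf_wellorderI)
  show "wf {(x :: 'a wellordered, y). x < y}"
    using wf_inv_image[OF wf_less, of "\<lambda>x. to_nat (Rep_wellordered x)"]
    by (simp add: less_wellordered_def inv_image_def)
qed intro_classes

definition vec_reindex :: "('a::finite \<Rightarrow> 'b::finite) \<Rightarrow> real^'b \<Rightarrow> real^'a"
  where "vec_reindex \<sigma> x = (\<chi> j. x $ \<sigma> j)"

lemma vec_reindex_nth [simp]: "vec_reindex \<sigma> x $ j = x $ \<sigma> j"
  by (simp add: vec_reindex_def)

lemma vec_reindex_inv_left: "bij \<sigma> \<Longrightarrow> vec_reindex (inv \<sigma>) (vec_reindex \<sigma> x) = x"
  by (simp add: vec_eq_iff bij_def surj_f_inv_f)

lemma vec_reindex_inv_right: "bij \<sigma> \<Longrightarrow> vec_reindex \<sigma> (vec_reindex (inv \<sigma>) x) = x"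
  by (simp add: vec_eq_iff bij_def)

lemma inner_vec_reindex:
  assumes "bij \<sigma>"
  shows "vec_reindex \<sigma> x \<bullet> vec_reindex \<sigma> y = x \<bullet> y"
  unfolding inner_vec_def vec_reindex_nth
  by (rule sum.reindex_bij_betw[of \<sigma> UNIV UNIV "\<lambda>i. x $ i \<bullet> y $ i"]) (use assms in \<open>simp add: bij_def\<close>)

lemma norm_vec_reindex: "bij \<sigma> \<Longrightarrow> norm (vec_reindex \<sigma> x) = norm x"
  by (simp add: norm_eq_sqrt_inner inner_vec_reindex)

lemma linear_vec_reindex: "linear (vec_reindex \<sigma>)"
  by (rule linearI) (simp_all add: vec_eq_iff)

lemma vec_reindex_cbox:
  assumes "bij \<sigma>"
  shows "vec_reindex \<sigma> ` cbox u v = cbox (vec_reindex \<sigma> u) (vec_reindex \<sigma> v)"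
proof (intro equalityI subsetI)
  fix y assume y: "y \<in> cbox (vec_reindex \<sigma> u) (vec_reindex \<sigma> v)"
  have "surj \<sigma>" using assms by (rule bij_is_surj)
  then have "vec_reindex (inv \<sigma>) y \<in> cbox u v"
    using y unfolding mem_box_cart by (metis surj_f_inv_f vec_reindex_nth)
  then show "y \<in> vec_reindex \<sigma> ` cbox u v"
    by (metis assms image_eqI vec_reindex_inv_right)
next
  fix y assume "y \<in> vec_reindex \<sigma> ` cbox u v"
  then show "y \<in> cbox (vec_reindex \<sigma> u) (vec_reindex \<sigma> v)"
    by (auto simp: mem_box_cart)
qed

lemma content_vec_reindex_cbox:
  assumes "bij \<sigma>"
  shows "Henstock_Kurzweil_Integration.content (vec_reindex \<sigma> ` cbox u v) =
    Henstock_Kurzweil_Integration.content (cbox u v)"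
proof -
  have "(\<Prod>j\<in>UNIV. v $ \<sigma> j - u $ \<sigma> j) = (\<Prod>i\<in>UNIV. v $ i - u $ i)"
    by (rule prod.reindex_bij_betw[of \<sigma> UNIV UNIV "\<lambda>i. v $ i - u $ i"])
      (use assms in \<open>simp add: bij_def\<close>)
  moreover have "cbox (vec_reindex \<sigma> u) (vec_reindex \<sigma> v) = {} \<longleftrightarrow> cbox u v = {}"
    by (metis assms image_is_empty vec_reindex_cbox)
  ultimately show ?thesis
    unfolding vec_reindex_cbox[OF assms] content_cbox_if_cart by simp
qed

lemma ball_subset_cbox_cart: "ball (0::real^'n) 1 \<subseteq> cbox (\<chi> i. -1) (\<chi> i. 1)"
proof
  fix x :: "real^'n" assume "x \<in> ball 0 1"
  then have "\<bar>x $ i\<bar> \<le> 1" for i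
    using component_le_norm_cart[of x i] by simp
  then show "x \<in> cbox (\<chi> i. -1) (\<chi> i. 1)"
    by (simp add: mem_box_cart abs_le_iff)
qed

lemma has_integral_ball_vec_reindex:
  fixes H :: "real^'a::finite \<Rightarrow> real" and \<sigma> :: "'a \<Rightarrow> 'b::finite"
  assumes \<sigma>: "bij \<sigma>" and H: "(H has_integral I) (ball 0 1)"
  shows "((\<lambda>y. H (vec_reindex \<sigma> y)) has_integral I) (ball 0 1)"
proof -
  define F where "F x = (if x \<in> ball 0 1 then H x else 0)" for x
  have "(F has_integral I) (cbox (\<chi> i. -1) (\<chi> i. 1))"
    unfolding F_def using has_integral_restrict[OF ball_subset_cbox_cart] H by blast
  then have "((\<lambda>x. F (vec_reindex \<sigma> x)) has_integral (1 / 1) *\<^sub>R I)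
      (vec_reindex (inv \<sigma>) ` cbox (\<chi> i. -1) (\<chi> i. 1))"
  proof (rule has_integral_twiddle[rotated 7])
    show "\<exists>w z. vec_reindex \<sigma> ` cbox u v = cbox w z" for u v
      using vec_reindex_cbox[OF \<sigma>] by blast
    show "\<exists>w z. vec_reindex (inv \<sigma>) ` cbox u v = cbox w z" for u v
      using vec_reindex_cbox[OF bij_imp_bij_inv[OF \<sigma>]] by blast
    show "isCont (vec_reindex \<sigma>) x" for x
      using linear_vec_reindex linear_conv_bounded_linear linear_continuous_at by blast
    show "Henstock_Kurzweil_Integration.content (vec_reindex \<sigma> ` cbox u v) =
        1 * Henstock_Kurzweil_Integration.content (cbox u v)" for u v
      using content_vec_reindex_cbox[OF \<sigma>] by simp
  qed (simp_all add: vec_reindex_inv_left[OF \<sigma>] vec_reindex_inv_right[OF \<sigma>])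
  moreover have "vec_reindex (inv \<sigma>) (\<chi> i. c) = (\<chi> i. c)" for c :: real
    by (simp add: vec_eq_iff)
  moreover have "F (vec_reindex \<sigma> x) = (if x \<in> ball 0 1 then H (vec_reindex \<sigma> x) else 0)" for x
    by (simp add: F_def norm_vec_reindex[OF \<sigma>])
  ultimately have "((\<lambda>x. if x \<in> ball 0 1 then H (vec_reindex \<sigma> x) else 0) has_integral I)
      (cbox (\<chi> i. -1) (\<chi> i. 1))"
    by (simp add: vec_reindex_cbox[OF bij_imp_bij_inv[OF \<sigma>]])
  then show ?thesis
    using has_integral_restrict[OF ball_subset_cbox_cart] by blast
qed

lemma integral_ball_vec_reindex:
  fixes H :: "real^'a::finite \<Rightarrow> real" and \<sigma> :: "'a \<Rightarrow> 'b::finite"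
  assumes \<sigma>: "bij \<sigma>"
  shows "integral (ball 0 1) (\<lambda>y. H (vec_reindex \<sigma> y)) = integral (ball 0 1) H"
proof (cases "H integrable_on ball 0 1")
  case True
  then show ?thesis
    by (intro integral_unique has_integral_ball_vec_reindex[OF \<sigma>] integrable_integral)
next
  case False
  have "\<not> (\<lambda>y. H (vec_reindex \<sigma> y)) integrable_on ball 0 1"
  proof
    assume "(\<lambda>y. H (vec_reindex \<sigma> y)) integrable_on ball 0 1"
    from has_integral_ball_vec_reindex[OF bij_imp_bij_inv[OF \<sigma>] integrable_integral[OF this]]
    have "H integrable_on ball 0 1"
      unfolding integrable_on_def by (auto simp only: vec_reindex_inv_right[OF \<sigma>])
    then show False using False by blast
  qed
  then show ?thesis using False by (simp add: not_integrable_integral)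
qed

lemma absolutely_integrable_on_ball_normalize:
  fixes h :: "'a::euclidean_space \<Rightarrow> real"
  assumes h: "continuous_on UNIV h"
  shows "(\<lambda>z. h (z /\<^sub>R norm z)) absolutely_integrable_on ball 0 1"
proof -
  have "bounded (h ` cball 0 1)"
    by (intro compact_imp_bounded compact_continuous_image continuous_on_subset[OF h]) auto
  then obtain M where M: "\<forall>x\<in>cball 0 1. norm (h x) \<le> M"
    unfolding bounded_iff by auto
  have "norm (z /\<^sub>R norm z) \<le> 1" for z :: 'a
    by (cases "z = 0") auto
  then have bound: "norm (h (z /\<^sub>R norm z)) \<le> M" for z
    using M by auto
  have "(\<lambda>z. h (z /\<^sub>R norm z)) \<in> borel_measurable borel"
    using borel_measurable_continuous_onI[OF h] by measurable
  then have "(\<lambda>z. h (z /\<^sub>R norm z)) \<in> borel_measurable (lebesgue_on (ball 0 1))"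
    by (intro measurable_restrict_space1 measurable_completion) simp
  then show ?thesis
    by (rule measurable_bounded_by_integrable_imp_absolutely_integrable[where g = "\<lambda>_. M"])
      (use bound in \<open>auto intro: integrable_on_const\<close>)
qed

lemma integral_ball_orthogonal_transformation:
  fixes g :: "real^'n::{finite,wellorder} \<Rightarrow> real"
    and T :: "real^'n::{finite,wellorder} \<Rightarrow> real^'n::{finite,wellorder}"
  assumes T: "orthogonal_transformation T" and g: "g absolutely_integrable_on ball 0 1"
  shows "integral (ball 0 1) (\<lambda>z. g (T z)) = integral (ball 0 1) g"
proof -
  have lin: "linear T" and inv: "orthogonal_transformation (inv T)"
    using T by (simp_all add: orthogonal_transformation_linear orthogonal_transformation_inv)
  have "(\<lambda>x. \<bar>det (matrix T)\<bar> * g (T x)) absolutely_integrable_on ball 0 1 \<and>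
      integral (ball 0 1) (\<lambda>x. \<bar>det (matrix T)\<bar> * g (T x)) = integral (ball 0 1) g \<longleftrightarrow>
      g absolutely_integrable_on ball 0 1 \<and> integral (ball 0 1) g = integral (ball 0 1) g"
  proof (rule cov_invertible_real[where h = "inv T" and g' = "\<lambda>_. T" and h' = "\<lambda>_. inv T"])
    show "(T has_derivative T) (at x within ball 0 1)" for x
      using lin by (rule linear_imp_has_derivative)
    show "(inv T has_derivative inv T) (at x within ball 0 1)" for x
      using inv by (simp add: orthogonal_transformation_linear linear_imp_has_derivative)
    show "T x \<in> ball 0 1 \<and> inv T (T x) = x" if "x \<in> ball 0 1" for x
      using that T by (simp add: orthogonal_transformation_norm orthogonal_transformation_inj inv_f_f)
    show "inv T y \<in> ball 0 1 \<and> T (inv T y) = y" if "y \<in> ball 0 1" for y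
      using that inv T by (simp add: orthogonal_transformation_norm orthogonal_transformation_surj surj_f_inv_f)
    show "inv T \<circ> T = id"
      using T by (simp add: orthogonal_transformation_inj)
  qed
  then show ?thesis
    using g T by simp
qed

lemma integral_ball_zonal_wellorder:
  fixes y1 y2 :: "real^'n::{finite,wellorder}" and G :: "real \<Rightarrow> real"
  assumes "norm y1 = 1" "norm y2 = 1" and G: "continuous_on UNIV G"
  shows "integral (ball 0 1) (\<lambda>z. G (y1 \<bullet> (z /\<^sub>R norm z))) =
         integral (ball 0 1) (\<lambda>z. G (y2 \<bullet> (z /\<^sub>R norm z)))"
proof -
  obtain T where T: "orthogonal_transformation T" "T y2 = y1"
    using orthogonal_transformation_exists[of y2 y1] assms by metis
  have "y1 \<bullet> T z = y2 \<bullet> z" for z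
    using T unfolding orthogonal_transformation_def by metis
  then have "y1 \<bullet> (T z /\<^sub>R norm (T z)) = y2 \<bullet> (z /\<^sub>R norm z)" for z
    using T by (simp add: orthogonal_transformation_norm)
  moreover have "(\<lambda>z. G (y1 \<bullet> (z /\<^sub>R norm z))) absolutely_integrable_on ball 0 1"
    by (intro absolutely_integrable_on_ball_normalize continuous_on_compose2[OF G]
        continuous_on_inner continuous_on_const continuous_on_id) auto
  ultimately show ?thesis
    using integral_ball_orthogonal_transformation[OF T(1), of "\<lambda>z. G (y1 \<bullet> (z /\<^sub>R norm z))"]
    by simp
qed

lemma sphere_mean_zonal_eq:
  fixes y1 y2 :: "real^'n::finite" and G :: "real \<Rightarrow> real"
  assumes y1: "norm y1 = 1" and y2: "norm y2 = 1" and G: "continuous_on UNIV G"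
  shows "sphere_mean (\<lambda>x. G (y1 \<bullet> x)) = sphere_mean (\<lambda>x. G (y2 \<bullet> x))"
proof -
  let ?\<rho> = "Rep_wellordered :: 'n wellordered \<Rightarrow> 'n"
  have \<rho>: "bij ?\<rho>"
    unfolding bij_def using type_definition.Rep_range[OF type_definition_wellordered]
    by (simp add: inj_on_def Rep_wellordered_inject)
  have \<rho>': "bij (inv ?\<rho>)"
    using \<rho> by (rule bij_imp_bij_inv)
  have reindex: "integral (ball 0 1) (\<lambda>z. G (y \<bullet> (z /\<^sub>R norm z))) =
      integral (ball 0 1) (\<lambda>w. G (vec_reindex ?\<rho> y \<bullet> (w /\<^sub>R norm w)))" for y :: "real^'n"
  proof -
    have "y \<bullet> vec_reindex (inv ?\<rho>) w = vec_reindex ?\<rho> y \<bullet> w" for w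
      using inner_vec_reindex[OF \<rho>', of "vec_reindex ?\<rho> y" w]
      by (simp only: vec_reindex_inv_left[OF \<rho>])
    then have pointwise: "y \<bullet> (vec_reindex (inv ?\<rho>) w /\<^sub>R norm (vec_reindex (inv ?\<rho>) w)) =
        vec_reindex ?\<rho> y \<bullet> (w /\<^sub>R norm w)" for w
      by (simp only: inner_scaleR_right norm_vec_reindex[OF \<rho>'])
    show ?thesis
      using integral_ball_vec_reindex[OF \<rho>', of "\<lambda>z. G (y \<bullet> (z /\<^sub>R norm z))"]
      by (simp only: pointwise)
  qed
  have norms: "norm (vec_reindex ?\<rho> y1) = 1" "norm (vec_reindex ?\<rho> y2) = 1"
    using y1 y2 by (simp_all only: norm_vec_reindex[OF \<rho>])
  show ?thesis
    unfolding sphere_mean_def reindex by (simp only: integral_ball_zonal_wellorder[OF norms G])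
qed

section \<open>Polynomials of bounded degree and spherical designs\<close>

definition vec_monomial :: "('n::finite \<Rightarrow> nat) \<Rightarrow> real^'n \<Rightarrow> real"
  where "vec_monomial \<alpha> x = (\<Prod>i\<in>UNIV. (x $ i) ^ (\<alpha> i))"

lemma vec_monomial_add: "vec_monomial (\<lambda>i. \<alpha> i + \<beta> i) x = vec_monomial \<alpha> x * vec_monomial \<beta> x"
  by (simp add: vec_monomial_def power_add prod.distrib)

lemma poly_deg_leI:
  fixes \<beta> :: "'j \<Rightarrow> ('n::finite \<Rightarrow> nat)"
  assumes "finite J" and "\<forall>j\<in>J. (\<Sum>i\<in>UNIV. \<beta> j i) \<le> n"
    and "\<forall>x. p x = (\<Sum>j\<in>J. c j * vec_monomial (\<beta> j) x)"
  shows "poly_deg_le n p"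
  unfolding poly_deg_le_def
proof (intro exI conjI allI)
  show "finite (\<beta> ` J)" and "\<forall>\<alpha>\<in>\<beta> ` J. (\<Sum>i\<in>UNIV. \<alpha> i) \<le> n"
    using assms(1,2) by auto
  fix x
  have "p x = (\<Sum>j\<in>J. c j * vec_monomial (\<beta> j) x)"
    using assms(3) by simp
  also have "\<dots> = (\<Sum>\<alpha>\<in>\<beta> ` J. \<Sum>j\<in>{j\<in>J. \<beta> j = \<alpha>}. c j * vec_monomial (\<beta> j) x)"
    by (rule sum.image_gen[OF assms(1)])
  also have "\<dots> = (\<Sum>\<alpha>\<in>\<beta> ` J. (\<Sum>j\<in>{j\<in>J. \<beta> j = \<alpha>}. c j) * (\<Prod>i\<in>UNIV. x $ i ^ \<alpha> i))"
    by (rule sum.cong) (auto simp: sum_distrib_right vec_monomial_def)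
  finally show "p x = \<dots>" .
qed

lemma poly_deg_leE:
  assumes "poly_deg_le n p"
  obtains A c where "finite A" "\<forall>\<alpha>\<in>A. (\<Sum>i\<in>UNIV. \<alpha> i) \<le> n"
    "\<forall>x. p x = (\<Sum>\<alpha>\<in>A. c \<alpha> * vec_monomial \<alpha> x)"
  using assms unfolding poly_deg_le_def vec_monomial_def by blast

lemma poly_deg_le_mono: "poly_deg_le n p \<Longrightarrow> n \<le> k \<Longrightarrow> poly_deg_le k p"
  unfolding poly_deg_le_def by (meson order_trans)

lemma poly_deg_le_const: "poly_deg_le n (\<lambda>x::real^'n::finite. c)"
  by (rule poly_deg_leI[where J = "{()}" and \<beta> = "\<lambda>_ _. 0" and c = "\<lambda>_. c"])
    (simp_all add: vec_monomial_def)

lemma poly_deg_le_component: "poly_deg_le 1 (\<lambda>x::real^'n::finite. x $ k)"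
proof (rule poly_deg_leI[where J = "{()}" and \<beta> = "\<lambda>_ i. if i = k then 1 else 0" and c = "\<lambda>_. 1"])
  have "vec_monomial (\<lambda>i. if i = k then 1 else 0) x = x $ k" for x :: "real^'n"
    unfolding vec_monomial_def by (simp add: if_distrib prod.delta' cong: if_cong)
  then show "\<forall>x::real^'n. x $ k = (\<Sum>j\<in>{()}. 1 * vec_monomial (\<lambda>i. if i = k then 1 else 0) x)"
    by simp
qed (simp_all add: sum.delta')

lemma poly_deg_le_add:
  assumes "poly_deg_le n p" "poly_deg_le n q"
  shows "poly_deg_le n (\<lambda>x. p x + q x)"
proof -
  obtain A c where A: "finite A" "\<forall>\<alpha>\<in>A. (\<Sum>i\<in>UNIV. \<alpha> i) \<le> n"
      "\<forall>x. p x = (\<Sum>\<alpha>\<in>A. c \<alpha> * vec_monomial \<alpha> x)"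
    using assms(1) by (rule poly_deg_leE)
  obtain B e where B: "finite B" "\<forall>\<alpha>\<in>B. (\<Sum>i\<in>UNIV. \<alpha> i) \<le> n"
      "\<forall>x. q x = (\<Sum>\<alpha>\<in>B. e \<alpha> * vec_monomial \<alpha> x)"
    using assms(2) by (rule poly_deg_leE)
  show ?thesis
    by (rule poly_deg_leI[where J = "A <+> B" and \<beta> = "case_sum id id" and c = "case_sum c e"])
      (use A B in \<open>auto simp: sum.Plus o_def\<close>)
qed

lemma poly_deg_le_mult:
  assumes "poly_deg_le n p" "poly_deg_le k q"
  shows "poly_deg_le (n + k) (\<lambda>x. p x * q x)"
proof -
  obtain A c where A: "finite A" "\<forall>\<alpha>\<in>A. (\<Sum>i\<in>UNIV. \<alpha> i) \<le> n"
      "\<forall>x. p x = (\<Sum>\<alpha>\<in>A. c \<alpha> * vec_monomial \<alpha> x)"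
    using assms(1) by (rule poly_deg_leE)
  obtain B e where B: "finite B" "\<forall>\<alpha>\<in>B. (\<Sum>i\<in>UNIV. \<alpha> i) \<le> k"
      "\<forall>x. q x = (\<Sum>\<alpha>\<in>B. e \<alpha> * vec_monomial \<alpha> x)"
    using assms(2) by (rule poly_deg_leE)
  show ?thesis
  proof (rule poly_deg_leI[where J = "A \<times> B" and \<beta> = "\<lambda>(\<alpha>, \<beta>) i. \<alpha> i + \<beta> i"
        and c = "\<lambda>(\<alpha>, \<beta>). c \<alpha> * e \<beta>"])
    show "\<forall>j\<in>A \<times> B. (\<Sum>i\<in>UNIV. (case j of (\<alpha>, \<beta>) \<Rightarrow> \<lambda>i. \<alpha> i + \<beta> i) i) \<le> n + k"
      using A(2) B(2) by (auto simp: sum.distrib add_mono)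
    show "\<forall>x. p x * q x = (\<Sum>j\<in>A \<times> B. (case j of (\<alpha>, \<beta>) \<Rightarrow> c \<alpha> * e \<beta>) *
        vec_monomial (case j of (\<alpha>, \<beta>) \<Rightarrow> \<lambda>i. \<alpha> i + \<beta> i) x)"
      using A(3) B(3)
      by (simp add: sum_product sum.cartesian_product case_prod_beta vec_monomial_add mult_ac)
  qed (use A B in simp)
qed

lemma poly_deg_le_sum:
  assumes "finite I" "\<And>i. i \<in> I \<Longrightarrow> poly_deg_le n (p i)"
  shows "poly_deg_le n (\<lambda>x. \<Sum>i\<in>I. p i x)"
  using assms by (induction I rule: finite_induct) (simp_all add: poly_deg_le_const poly_deg_le_add)

lemma poly_deg_le_power: "poly_deg_le n p \<Longrightarrow> poly_deg_le (k * n) (\<lambda>x. p x ^ k)"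
  by (induction k) (simp_all add: poly_deg_le_const poly_deg_le_mult)

lemma poly_deg_le_inner: "poly_deg_le 1 (\<lambda>x::real^'n::finite. y \<bullet> x)"
proof -
  have "poly_deg_le (0 + 1) (\<lambda>x::real^'n. y $ i * x $ i)" for i
    by (rule poly_deg_le_mult[OF poly_deg_le_const poly_deg_le_component])
  then have "poly_deg_le 1 (\<lambda>x::real^'n. \<Sum>i\<in>UNIV. y $ i * x $ i)"
    by (intro poly_deg_le_sum) auto
  then show ?thesis
    by (simp add: inner_vec_def)
qed

lemma poly_deg_le_poly_comp:
  assumes "poly_deg_le 1 e"
  shows "poly_deg_le (degree q) (\<lambda>x. poly q (e x))"
proof -
  have "poly_deg_le (degree q) (\<lambda>x. \<Sum>i\<le>degree q. coeff q i * e x ^ i)"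
  proof (rule poly_deg_le_sum)
    fix i assume "i \<in> {..degree q}"
    then show "poly_deg_le (degree q) (\<lambda>x. coeff q i * e x ^ i)"
      using poly_deg_le_mult[OF poly_deg_le_const[of 0] poly_deg_le_power[OF assms, of i]]
      by (auto intro: poly_deg_le_mono)
  qed simp
  then show ?thesis
    by (simp add: poly_altdef)
qed

lemma norm_diff_sq_unit:
  fixes x y :: "'a::real_inner"
  assumes "norm x = 1" "norm y = 1"
  shows "(norm (x - y))\<^sup>2 = 2 - 2 * (x \<bullet> y)"
proof -
  have "x \<bullet> x = 1" "y \<bullet> y = 1"
    using assms by (simp_all add: dot_square_norm)
  then show ?thesis
    by (simp add: power2_norm_eq_inner inner_diff_left inner_diff_right inner_commute)
qed

lemma spherical_design_zonal_sum_eq: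
  fixes \<omega> :: "(real^'n::finite) set"
  assumes D: "spherical_design n \<omega>" and q: "degree q \<le> n"
    and y1: "norm y1 = 1" and y2: "norm y2 = 1"
  shows "(\<Sum>x\<in>\<omega>. poly q (y1 \<bullet> x)) = (\<Sum>x\<in>\<omega>. poly q (y2 \<bullet> x))"
proof -
  have mean: "(\<Sum>x\<in>\<omega>. poly q (y \<bullet> x)) / real (card \<omega>) = sphere_mean (\<lambda>x. poly q (y \<bullet> x))"
    for y :: "real^'n"
  proof -
    have "poly_deg_le n (\<lambda>x. poly q (y \<bullet> x))"
      using poly_deg_le_poly_comp[OF poly_deg_le_inner] q by (rule poly_deg_le_mono)
    then show ?thesis
      using D unfolding spherical_design_def by blast
  qed
  have "sphere_mean (\<lambda>x. poly q (y1 \<bullet> x)) = sphere_mean (\<lambda>x. poly q (y2 \<bullet> x))"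
    by (rule sphere_mean_zonal_eq[OF y1 y2]) (intro continuous_intros)
  then have "(\<Sum>x\<in>\<omega>. poly q (y1 \<bullet> x)) / real (card \<omega>) = (\<Sum>x\<in>\<omega>. poly q (y2 \<bullet> x)) / real (card \<omega>)"
    unfolding mean .
  moreover have "card \<omega> \<noteq> 0"
    using D by (simp add: spherical_design_def)
  ultimately show ?thesis
    by (simp add: divide_cancel_right)
qed

lemma spherical_design_distance_sum_eq:
  fixes \<omega> :: "(real^'n::finite) set"
  assumes D: "spherical_design n \<omega>" and q: "degree q \<le> n"
    and y1: "norm y1 = 1" and y2: "norm y2 = 1"
  shows "(\<Sum>x\<in>\<omega>. poly q ((norm (y1 - x))\<^sup>2)) = (\<Sum>x\<in>\<omega>. poly q ((norm (y2 - x))\<^sup>2))"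
proof -
  let ?p = "pcompose q [:2, -2:]"
  have sum_eq: "(\<Sum>x\<in>\<omega>. poly q ((norm (y - x))\<^sup>2)) = (\<Sum>x\<in>\<omega>. poly ?p (y \<bullet> x))"
    if "norm y = 1" for y :: "real^'n"
  proof (rule sum.cong)
    fix x assume "x \<in> \<omega>"
    then have "norm x = 1"
      using D by (auto simp: spherical_design_def)
    then show "poly q ((norm (y - x))\<^sup>2) = poly ?p (y \<bullet> x)"
      using that by (simp add: norm_diff_sq_unit poly_pcompose algebra_simps)
  qed simp
  have "degree ?p \<le> n"
    using q by (simp add: degree_pcompose)
  then show ?thesis
    unfolding sum_eq[OF y1] sum_eq[OF y2] by (rule spherical_design_zonal_sum_eq[OF D _ y1 y2])
qed

lemma spherical_design_distances_not_within:
  fixes \<omega> :: "(real^'n::finite) set"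
  assumes D: "spherical_design (2 * card R) \<omega>" and R: "finite R" "0 \<notin> R" and y: "norm y = 1"
  shows "\<exists>x\<in>\<omega>. (norm (y - x))\<^sup>2 \<notin> R"
proof (rule ccontr)
  assume "\<not> ?thesis"
  then have within: "\<forall>x\<in>\<omega>. (norm (y - x))\<^sup>2 \<in> R" by blast
  define q where "q = (\<Prod>d\<in>R. [:-d, 1:] ^ 2)"
  have poly_q: "poly q t = (\<Prod>d\<in>R. (t - d)\<^sup>2)" for t
    by (simp add: q_def poly_prod)
  have "degree q = 2 * card R"
    unfolding q_def by (subst degree_prod_sum_eq) (auto simp: degree_linear_power)
  obtain x0 where x0: "x0 \<in> \<omega>"
    using D by (auto simp: spherical_design_def)
  then have "norm x0 = 1"
    using D by (auto simp: spherical_design_def)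
  have "poly q ((norm (y - x))\<^sup>2) = 0" if "x \<in> \<omega>" for x
    using within that R(1) by (auto simp: poly_q prod_zero_iff)
  then have "(\<Sum>x\<in>\<omega>. poly q ((norm (y - x))\<^sup>2)) = 0"
    by simp
  moreover have "0 < (\<Sum>x\<in>\<omega>. poly q ((norm (x0 - x))\<^sup>2))"
  proof (rule sum_pos2[OF _ x0])
    show "0 < poly q ((norm (x0 - x0))\<^sup>2)"
      using R by (auto simp: poly_q intro!: prod_pos)
  qed (use D in \<open>auto simp: spherical_design_def poly_q prod_nonneg\<close>)
  ultimately show False
    using spherical_design_distance_sum_eq[OF D _ y \<open>norm x0 = 1\<close>] \<open>degree q = 2 * card R\<close>
    by simp
qed

section \<open>Hermite interpolation\<close>

definition node_poly :: "real set \<Rightarrow> real set \<Rightarrow> real poly"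
  where "node_poly S D = (\<Prod>s\<in>S. [:-s, 1:]) * (\<Prod>d\<in>D. [:-d, 1:] ^ 2)"

definition hermite_interp ::
    "(real \<Rightarrow> real) \<Rightarrow> (real \<Rightarrow> real) \<Rightarrow> real set \<Rightarrow> real set \<Rightarrow> real poly \<Rightarrow> bool"
  where "hermite_interp F F' S D H \<longleftrightarrow>
    (\<forall>z\<in>S \<union> D. poly H z = F z) \<and> (\<forall>d\<in>D. poly (pderiv H) d = F' d)"

context
  fixes S D :: "real set"
  assumes fin: "finite S" "finite D"
begin

lemma poly_node_poly: "poly (node_poly S D) x = (\<Prod>s\<in>S. x - s) * (\<Prod>d\<in>D. (x - d)\<^sup>2)"
  by (simp add: node_poly_def poly_prod)

lemma poly_node_poly_eq_0_iff: "poly (node_poly S D) z = 0 \<longleftrightarrow> z \<in> S \<union> D"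
  using fin by (auto simp: poly_node_poly prod_zero_iff)

lemma degree_node_poly: "degree (node_poly S D) = card S + 2 * card D"
proof -
  have "degree (\<Prod>s\<in>S. [:-s, 1:]) = card S"
    by (subst degree_prod_sum_eq) auto
  moreover have "degree (\<Prod>d\<in>D. [:-d, 1:] ^ 2) = 2 * card D"
    by (subst degree_prod_sum_eq) (auto simp: degree_linear_power)
  moreover have "(\<Prod>s\<in>S. [:-s, 1:]) \<noteq> 0" "(\<Prod>d\<in>D. [:-d, 1:] ^ 2) \<noteq> 0"
    using fin by (auto simp: prod_zero_iff)
  ultimately show ?thesis
    by (simp add: node_poly_def degree_mult_eq)
qed

lemma lead_coeff_node_poly: "lead_coeff (node_poly S D) = 1"
  by (simp add: node_poly_def lead_coeff_mult lead_coeff_prod lead_coeff_power)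

lemma poly_pderiv_node_poly_eq_0:
  assumes "d \<in> D"
  shows "poly (pderiv (node_poly S D)) d = 0"
proof -
  have "[:-d, 1:] ^ 2 dvd node_poly S D"
    unfolding node_poly_def using fin assms by (intro dvd_mult dvd_prodI)
  then obtain Q where "node_poly S D = [:-d, 1:] ^ Suc 1 * Q"
    by (auto simp: numeral_2_eq_2 elim!: dvdE)
  then have "pderiv (node_poly S D) = [:-d, 1:] ^ Suc 1 * pderiv Q + smult (of_nat (Suc 1)) (Q * [:-d, 1:] ^ 1)"
    by (simp only: lemma_order_pderiv1)
  then show ?thesis
    by simp
qed

end

lemma hermite_interp_insert_simple:
  assumes fin: "finite S" "finite D" and z: "z \<notin> S \<union> D" and H: "hermite_interp F F' S D H"
    and deg: "degree H \<le> card S + 2 * card D - 1"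
  obtains H' where "hermite_interp F F' (insert z S) D H'" "degree H' \<le> card S + 2 * card D"
proof
  define c where "c = (F z - poly H z) / poly (node_poly S D) z"
  have nz: "poly (node_poly S D) z \<noteq> 0"
    using fin z by (simp add: poly_node_poly_eq_0_iff)
  show "hermite_interp F F' (insert z S) D (H + smult c (node_poly S D))"
    using H nz fin unfolding hermite_interp_def
    by (auto simp: c_def poly_node_poly_eq_0_iff poly_pderiv_node_poly_eq_0 pderiv_add pderiv_smult)
  show "degree (H + smult c (node_poly S D)) \<le> card S + 2 * card D"
    using deg fin degree_add_le[OF _ degree_smult_le[of c "node_poly S D"]] by (simp add: degree_node_poly)
qed

lemma hermite_interp_insert_double:
  assumes fin: "finite S" "finite D" and z: "z \<notin> S \<union> D" and H: "hermite_interp F F' S D H"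
    and deg: "degree H \<le> card S + 2 * card D - 1"
  obtains H' where "hermite_interp F F' S (insert z D) H'" "degree H' \<le> card S + 2 * card D + 1"
proof -
  obtain H1 where H1: "hermite_interp F F' (insert z S) D H1" and deg1: "degree H1 \<le> card S + 2 * card D"
    using hermite_interp_insert_simple[OF fin z H deg] .
  have fin': "finite (insert z S)"
    using fin by simp
  have "z \<notin> S"
    using z by simp
  then have "node_poly (insert z S) D = [:-z, 1:] * node_poly S D"
    unfolding node_poly_def by (simp only: prod.insert[OF fin(1) \<open>z \<notin> S\<close>] mult.assoc)
  then have slope: "poly (pderiv (node_poly (insert z S) D)) z = poly (node_poly S D) z"
    by (simp add: pderiv_diff pderiv_smult pderiv_pCons)
  have nz: "poly (node_poly S D) z \<noteq> 0"
    using fin z by (simp add: poly_node_poly_eq_0_iff)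
  define c where "c = (F' z - poly (pderiv H1) z) / poly (node_poly S D) z"
  have "hermite_interp F F' S (insert z D) (H1 + smult c (node_poly (insert z S) D))"
    using H1 nz slope fin' fin unfolding hermite_interp_def
    by (auto simp: c_def poly_node_poly_eq_0_iff poly_pderiv_node_poly_eq_0 pderiv_add pderiv_smult)
  moreover have "degree (H1 + smult c (node_poly (insert z S) D)) \<le> card S + 2 * card D + 1"
    using deg1 degree_add_le[OF _ degree_smult_le[of c "node_poly (insert z S) D"]] fin z
    by (simp add: degree_node_poly)
  ultimately show ?thesis
    by (rule that)
qed

lemma hermite_interp_exists:
  assumes S: "finite S" and D: "finite D" "S \<inter> D = {}"
  obtains H where "hermite_interp F F' S D H" "degree H \<le> card S + 2 * card D - 1"
proof -
  have simple: "\<exists>H. hermite_interp F F' S {} H \<and> degree H \<le> card S + 2 * card ({}::real set) - 1"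
    using S
  proof (induction S rule: finite_induct)
    case empty
    show ?case by (auto simp: hermite_interp_def intro!: exI[of _ 0])
  next
    case (insert z S)
    then obtain H where H: "hermite_interp F F' S {} H" "degree H \<le> card S + 2 * card ({}::real set) - 1"
      by blast
    have "z \<notin> S \<union> {}"
      using insert(2) by simp
    then obtain H' where "hermite_interp F F' (insert z S) {} H'" "degree H' \<le> card S + 2 * card ({}::real set)"
      by (rule hermite_interp_insert_simple[OF insert(1) finite.emptyI _ H])
    then show ?case
      using insert(1,2) by auto
  qed
  have "\<exists>H. hermite_interp F F' S D H \<and> degree H \<le> card S + 2 * card D - 1"
    using D
  proof (induction D rule: finite_induct)
    case empty
    then show ?case
      using simple by simp
  next
    case (insert z D)
    then obtain H where H: "hermite_interp F F' S D H" "degree H \<le> card S + 2 * card D - 1"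
      by blast
    have "z \<notin> S \<union> D"
      using insert.hyps(2) insert.prems by auto
    then obtain H' where "hermite_interp F F' S (insert z D) H'" "degree H' \<le> card S + 2 * card D + 1"
      by (rule hermite_interp_insert_double[OF S insert(1) _ H])
    then show ?case
      using insert.hyps by auto
  qed
  then show ?thesis
    using that by blast
qed

section \<open>The Hermite remainder under a concave derivative\<close>

lemma rolle_zeros_deriv:
  fixes \<psi> \<psi>' :: "real \<Rightarrow> real"
  assumes Z: "finite Z" "Z \<subseteq> {lo..hi}" "\<forall>z\<in>Z. \<psi> z = 0"
    and cont: "continuous_on {lo..hi} \<psi>"
    and der: "\<And>x. lo < x \<Longrightarrow> x < hi \<Longrightarrow> (\<psi> has_real_derivative \<psi>' x) (at x)"
  obtains Z' where "finite Z'" "card Z \<le> card Z' + 1" "Z' \<subseteq> {lo<..<hi}" "Z' \<inter> Z = {}"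
    "\<forall>z\<in>Z'. \<psi>' z = 0"
proof -
  \<comment> \<open>The extra invariant keeps each new Rolle point, taken between the two largest
    zeros, distinct from the earlier ones.\<close>
  have "\<exists>Z'. finite Z' \<and> card Z \<le> card Z' + 1 \<and> Z' \<subseteq> {lo<..<hi} \<and> Z' \<inter> Z = {} \<and>
      (\<forall>z\<in>Z'. \<psi>' z = 0) \<and> (\<forall>z\<in>Z'. \<exists>a\<in>Z. z < a)"
    using Z
  proof (induction Z rule: finite_linorder_max_induct)
    case empty
    then show ?case by (intro exI[of _ "{}"]) auto
  next
    case (insert b A)
    show ?case
    proof (cases "A = {}")
      case True
      then show ?thesis by (intro exI[of _ "{}"]) auto
    next
      case False
      obtain Z' where Z': "finite Z'" "card A \<le> card Z' + 1" "Z' \<subseteq> {lo<..<hi}" "Z' \<inter> A = {}"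
        "\<forall>z\<in>Z'. \<psi>' z = 0" "\<forall>z\<in>Z'. \<exists>a\<in>A. z < a"
        using insert by auto
      define a where "a = Max A"
      have a: "a \<in> A" "\<forall>x\<in>A. x \<le> a"
        using False insert(1) by (simp_all add: a_def)
      then have "a < b" "lo \<le> a" "b \<le> hi"
        using insert(2,4) by auto
      have "\<exists>c. a < c \<and> c < b \<and> DERIV \<psi> c :> 0"
      proof (rule Rolle)
        show "\<psi> a = \<psi> b"
          using insert(5) a by auto
        show "continuous_on {a..b} \<psi>"
          using cont by (rule continuous_on_subset) (use \<open>lo \<le> a\<close> \<open>b \<le> hi\<close> in auto)
        show "\<psi> differentiable (at x)" if "a < x" "x < b" for x
          unfolding real_differentiable_def using der[of x] that \<open>lo \<le> a\<close> \<open>b \<le> hi\<close> by auto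
      qed fact
      then obtain c where c: "a < c" "c < b" and "DERIV \<psi> c :> 0"
        by blast
      moreover have "DERIV \<psi> c :> \<psi>' c"
        using der c \<open>lo \<le> a\<close> \<open>b \<le> hi\<close> by auto
      ultimately have c0: "\<psi>' c = 0"
        using DERIV_unique by blast
      have "c \<notin> Z'"
        using Z'(6) a(2) c(1) by force
      show ?thesis
      proof (intro exI[of _ "insert c Z'"] conjI)
        show "card (insert b A) \<le> card (insert c Z') + 1"
          using Z'(1,2) \<open>c \<notin> Z'\<close> insert(1,2) by (simp add: card_insert_if)
        show "insert c Z' \<inter> insert b A = {}"
          using Z'(4,6) c a(2) insert(2) by fastforce
      qed (use Z' c c0 \<open>lo \<le> a\<close> \<open>b \<le> hi\<close> in auto)
    qed
  qed
  then show ?thesis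
    using that by blast
qed

lemma rolle_zeros_higher_deriv:
  fixes \<phi> :: "nat \<Rightarrow> real \<Rightarrow> real"
  assumes der: "\<And>j x. j < k \<Longrightarrow> lo < x \<Longrightarrow> x < hi \<Longrightarrow> (\<phi> j has_real_derivative \<phi> (Suc j) x) (at x)"
    and Z: "finite Z" "Z \<subseteq> {lo<..<hi}" "\<forall>z\<in>Z. \<phi> 0 z = 0"
  obtains Z' where "finite Z'" "card Z \<le> card Z' + k" "Z' \<subseteq> {lo<..<hi}" "\<forall>z\<in>Z'. \<phi> k z = 0"
proof -
  have "\<exists>Z'. finite Z' \<and> card Z \<le> card Z' + k \<and> Z' \<subseteq> {lo<..<hi} \<and> (\<forall>z\<in>Z'. \<phi> k z = 0)"
    using der
  proof (induction k)
    case 0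
    then show ?case using Z by auto
  next
    case (Suc k)
    then obtain Z1 where Z1: "finite Z1" "card Z \<le> card Z1 + k" "Z1 \<subseteq> {lo<..<hi}" "\<forall>z\<in>Z1. \<phi> k z = 0"
      by auto
    show ?case
    proof (cases "Z1 = {}")
      case True
      then show ?thesis using Z1 by (intro exI[of _ "{}"]) auto
    next
      case False
      define l h where "l = Min Z1" and "h = Max Z1"
      have lh: "lo < l" "h < hi" "Z1 \<subseteq> {l..h}"
        using Z1 False by (auto simp: l_def h_def)
      have der_k: "(\<phi> k has_real_derivative \<phi> (Suc k) x) (at x)" if "l \<le> x" "x \<le> h" for x
        using Suc.prems that lh by auto
      then have "continuous_on {l..h} (\<phi> k)"
        by (meson DERIV_isCont atLeastAtMost_iff continuous_at_imp_continuous_on)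
      moreover have "(\<phi> k has_real_derivative \<phi> (Suc k) x) (at x)" if "l < x" "x < h" for x
        using der_k that by simp
      ultimately obtain Z2 where "finite Z2" "card Z1 \<le> card Z2 + 1" "Z2 \<subseteq> {l<..<h}"
          "\<forall>z\<in>Z2. \<phi> (Suc k) z = 0"
        by (rule rolle_zeros_deriv[OF Z1(1) lh(3) Z1(4)])
      then show ?thesis
        using Z1(2) lh by (intro exI[of _ Z2]) auto
    qed
  qed
  then show ?thesis
    using that by blast
qed

lemma rolle_zeros_higher_deriv_double:
  fixes \<phi> :: "nat \<Rightarrow> real \<Rightarrow> real"
  assumes k: "1 \<le> k"
    and cont: "continuous_on {lo..hi} (\<phi> 0)"
    and der: "\<And>j x. j < k \<Longrightarrow> lo < x \<Longrightarrow> x < hi \<Longrightarrow> (\<phi> j has_real_derivative \<phi> (Suc j) x) (at x)"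
    and Z: "finite Z" "Z \<subseteq> {lo..hi}" "\<forall>z\<in>Z. \<phi> 0 z = 0"
    and D: "D \<subseteq> Z \<inter> {lo<..<hi}" "\<forall>z\<in>D. \<phi> 1 z = 0"
  obtains Z' where "finite Z'" "card Z + card D \<le> card Z' + k" "Z' \<subseteq> {lo<..<hi}" "\<forall>z\<in>Z'. \<phi> k z = 0"
proof -
  obtain Z1 where Z1: "finite Z1" "card Z \<le> card Z1 + 1" "Z1 \<subseteq> {lo<..<hi}" "Z1 \<inter> Z = {}"
      "\<forall>z\<in>Z1. \<phi> 1 z = 0"
    by (rule rolle_zeros_deriv[OF Z cont]) (use der k in auto)
  have "finite D"
    using D(1) Z(1) finite_subset by blast
  then have card: "card (Z1 \<union> D) = card Z1 + card D"
    using Z1(1,4) D(1) by (subst card_Un_disjoint) auto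
  have der': "((\<lambda>j. \<phi> (Suc j)) j has_real_derivative (\<lambda>j. \<phi> (Suc j)) (Suc j) x) (at x)"
    if "j < k - 1" "lo < x" "x < hi" for j x
    using der[of "Suc j" x] that by simp
  have Z1D: "finite (Z1 \<union> D)" "Z1 \<union> D \<subseteq> {lo<..<hi}" "\<forall>z\<in>Z1 \<union> D. \<phi> (Suc 0) z = 0"
    using Z1 D \<open>finite D\<close> by (auto simp: One_nat_def)
  obtain Z' where "finite Z'" "card (Z1 \<union> D) \<le> card Z' + (k - 1)" "Z' \<subseteq> {lo<..<hi}"
      "\<forall>z\<in>Z'. \<phi> (Suc (k - 1)) z = 0"
    using rolle_zeros_higher_deriv[where \<phi> = "\<lambda>j. \<phi> (Suc j)" and k = "k - 1", OF der' Z1D]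
    by blast
  then show ?thesis
    using that card Z1(2) k by simp
qed

lemma obtain_three_ordered:
  fixes Z :: "'a::linorder set"
  assumes "finite Z" "3 \<le> card Z"
  obtains a b c where "a \<in> Z" "b \<in> Z" "c \<in> Z" "a < b" "b < c"
proof -
  obtain xs where xs: "sorted_wrt (<) xs" "set xs = Z" "length xs = card Z"
    using finite_set_strict_sorted[OF assms(1)] by blast
  show ?thesis
  proof (rule that[of "xs ! 0" "xs ! 1" "xs ! 2"])
    show "xs ! 0 \<in> Z" "xs ! 1 \<in> Z" "xs ! 2 \<in> Z"
      using xs(2,3) assms(2) by (auto intro!: nth_mem)
    show "xs ! 0 < xs ! 1" "xs ! 1 < xs ! 2"
      using xs(1,3) assms(2) by (auto intro: sorted_wrt_nth_less)
  qed
qed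

lemma poly_degree_le_2:
  fixes Q :: "real poly"
  assumes "degree Q \<le> 2"
  shows "poly Q x = coeff Q 2 * x\<^sup>2 + coeff Q 1 * x + coeff Q 0"
proof -
  have "poly Q x = (\<Sum>i\<le>2. coeff Q i * x ^ i)"
    unfolding poly_altdef using assms
    by (intro sum.mono_neutral_left) (auto simp: coeff_eq_0)
  then show ?thesis
    by (simp add: numeral_2_eq_2 algebra_simps)
qed

lemma poly_quadratic_chord_gap:
  fixes Q :: "real poly"
  assumes "degree Q \<le> 2" and "b = (1 - t) * a + t * c"
  shows "(1 - t) * poly Q a + t * poly Q c - poly Q b = coeff Q 2 * (t * (1 - t) * (c - a)\<^sup>2)"
  unfolding poly_degree_le_2[OF assms(1)] assms(2) by (simp add: algebra_simps power2_eq_square)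

lemma obtain_convex_combination:
  fixes a b c :: real
  assumes "a < b" "b < c"
  obtains t where "0 < t" "t < 1" "b = (1 - t) * a + t * c"
proof
  let ?t = "(b - a) / (c - a)"
  show "0 < ?t" "?t < 1"
    using assms by (auto simp: field_simps)
  have "(1 - t) * a + t * c = a + t * (c - a)" for t :: real
    by (simp add: algebra_simps)
  moreover have "?t * (c - a) = b - a"
    using assms by simp
  ultimately show "b = (1 - ?t) * a + ?t * c"
    by (metis add.commute diff_add_cancel)
qed

lemma concave_on_quadratic_contact:
  fixes F :: "real \<Rightarrow> real" and Q :: "real poly"
  assumes conc: "concave_on I F" and Q: "degree Q \<le> 2"
    and abc: "a \<in> I" "c \<in> I" "a < b" "b < c"
    and contact: "\<forall>x\<in>{a, b, c}. F x = poly Q x"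
  shows "coeff Q 2 \<le> 0"
proof -
  obtain t where t: "0 < t" "t < 1" "b = (1 - t) * a + t * c"
    using obtain_convex_combination[OF abc(3,4)] .
  have "(1 - t) * F a + t * F c \<le> F b"
    using concave_onD[OF conc, of t a c] abc t by simp
  then have "coeff Q 2 * (t * (1 - t) * (c - a)\<^sup>2) \<le> 0"
    using poly_quadratic_chord_gap[OF Q t(3)] contact by simp
  then show ?thesis
    using t(1,2) abc(3,4) by (auto simp: mult_le_0_iff)
qed

lemma strictly_concave_on_quadratic_contact:
  fixes F :: "real \<Rightarrow> real" and Q :: "real poly"
  assumes conc: "strictly_concave_on I F" and Q: "degree Q \<le> 2"
    and abc: "a \<in> I" "c \<in> I" "a < b" "b < c"
    and contact: "\<forall>x\<in>{a, b, c}. F x = poly Q x"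
  shows "coeff Q 2 < 0"
proof -
  obtain t where t: "0 < t" "t < 1" "b = (1 - t) * a + t * c"
    using obtain_convex_combination[OF abc(3,4)] .
  have "(1 - t) * F a + t * F c < F b"
    using conc abc t unfolding strictly_concave_on_def by auto
  then have "coeff Q 2 * (t * (1 - t) * (c - a)\<^sup>2) < 0"
    using poly_quadratic_chord_gap[OF Q t(3)] contact by simp
  then show ?thesis
    using t(1,2) abc(3,4) by (auto simp: mult_less_0_iff)
qed

lemma higher_deriv_contact_points:
  fixes f :: "real \<Rightarrow> real" and P :: "real poly"
  assumes k: "1 \<le> k"
    and cont: "continuous_on {lo..hi} f"
    and diff: "\<forall>j<k. \<forall>t\<in>{lo<..<hi}. (deriv ^^ j) f differentiable (at t)"
    and Z: "finite Z" "Z \<subseteq> {lo..hi}" "\<forall>z\<in>Z. poly P z = f z"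
    and D: "D \<subseteq> Z \<inter> {lo<..<hi}" "\<forall>d\<in>D. poly (pderiv P) d = deriv f d"
    and count: "k + 3 \<le> card Z + card D"
  obtains a b c where "lo < a" "a < b" "b < c" "c < hi"
    "\<forall>x\<in>{a, b, c}. (deriv ^^ k) f x = poly ((pderiv ^^ k) P) x"
proof -
  define \<phi> where "\<phi> j x = (deriv ^^ j) f x - poly ((pderiv ^^ j) P) x" for j x
  have der: "(\<phi> j has_real_derivative \<phi> (Suc j) x) (at x)" if "j < k" "lo < x" "x < hi" for j x
  proof -
    have "((deriv ^^ j) f has_real_derivative (deriv ^^ Suc j) f x) (at x)"
      using diff that by (simp add: DERIV_deriv_iff_real_differentiable)
    then show ?thesis
      unfolding \<phi>_def by (auto intro!: derivative_eq_intros simp: poly_DERIV)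
  qed
  have cont0: "continuous_on {lo..hi} (\<phi> 0)"
    unfolding \<phi>_def by (simp, intro continuous_intros cont)
  have zeros: "\<forall>z\<in>Z. \<phi> 0 z = 0" and double_zeros: "\<forall>d\<in>D. \<phi> 1 d = 0"
    using Z(3) D(2) by (simp_all add: \<phi>_def)
  obtain Z' where Z': "finite Z'" "card Z + card D \<le> card Z' + k" "Z' \<subseteq> {lo<..<hi}"
      "\<forall>z\<in>Z'. \<phi> k z = 0"
    by (rule rolle_zeros_higher_deriv_double[OF k cont0 der Z(1,2) zeros D(1) double_zeros])
  then have "3 \<le> card Z'"
    using count by linarith
  then obtain a b c where abc: "a \<in> Z'" "b \<in> Z'" "c \<in> Z'" "a < b" "b < c"
    by (rule obtain_three_ordered[OF Z'(1)])
  show ?thesis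
  proof (rule that[OF _ abc(4,5)])
    show "lo < a" "c < hi"
      using Z'(3) abc by auto
    show "\<forall>x\<in>{a, b, c}. (deriv ^^ k) f x = poly ((pderiv ^^ k) P) x"
      using Z'(4) abc by (simp add: \<phi>_def)
  qed
qed

context
  fixes f :: "real \<Rightarrow> real" and k :: nat and lo hi :: real and S D :: "real set" and H :: "real poly"
  assumes k: "1 \<le> k"
    and cont: "continuous_on {lo..hi} f"
    and diff: "\<forall>j<k. \<forall>t\<in>{lo<..<hi}. (deriv ^^ j) f differentiable (at t)"
    and S: "finite S" "S \<subseteq> {lo..hi}" and D: "finite D" "D \<subseteq> {lo<..<hi}" and disj: "S \<inter> D = {}"
    and count: "card S + 2 * card D = k + 2"
    and H: "hermite_interp f (deriv f) S D H" and deg: "degree H \<le> k + 1"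
begin

lemma hermite_remainder_quadratic:
  assumes r: "r \<in> {lo..hi}" "r \<notin> S \<union> D"
  obtains a b c Q where "lo < a" "a < b" "b < c" "c < hi" "degree Q \<le> 2"
    "coeff Q 2 * poly (node_poly S D) r = pochhammer 3 k * (f r - poly H r)"
    "\<forall>x\<in>{a, b, c}. (deriv ^^ k) f x = poly Q x"
proof -
  define W where "W = node_poly S D"
  have Wr: "poly W r \<noteq> 0"
    using S(1) D(1) r(2) by (simp add: W_def poly_node_poly_eq_0_iff)
  define K where "K = (f r - poly H r) / poly W r"
  define P where "P = H + smult K W"
  define Z where "Z = insert r (S \<union> D)"
  have Z: "finite Z" "Z \<subseteq> {lo..hi}" "D \<subseteq> Z \<inter> {lo<..<hi}"
    using S D r(1) by (auto simp: Z_def)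
  have "\<forall>z\<in>Z. poly P z = f z"
    using H S(1) D(1) Wr by (auto simp: Z_def P_def K_def W_def hermite_interp_def poly_node_poly_eq_0_iff)
  moreover have "\<forall>d\<in>D. poly (pderiv P) d = deriv f d"
    using H S(1) D(1)
    by (simp add: P_def W_def hermite_interp_def poly_pderiv_node_poly_eq_0 pderiv_add pderiv_smult)
  moreover have "k + 3 \<le> card Z + card D"
    using S(1) D(1) disj r(2) count by (simp add: Z_def card_Un_disjoint)
  ultimately obtain a b c where abc: "lo < a" "a < b" "b < c" "c < hi"
      "\<forall>x\<in>{a, b, c}. (deriv ^^ k) f x = poly ((pderiv ^^ k) P) x"
    by (rule higher_deriv_contact_points[OF k cont diff Z(1,2) _ Z(3)])
  have "degree W = k + 2"
    using S(1) D(1) count by (simp add: W_def degree_node_poly)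
  then have "degree P \<le> k + 2"
    using deg degree_add_le[OF _ degree_smult_le[of K W]] by (simp add: P_def)
  then have "degree ((pderiv ^^ k) P) \<le> 2"
    by (simp add: degree_higher_pderiv)
  have "coeff P (k + 2) = K"
    using deg \<open>degree W = k + 2\<close> lead_coeff_node_poly[OF S(1) D(1)]
    by (simp add: P_def W_def coeff_eq_0)
  then have "coeff ((pderiv ^^ k) P) 2 * poly W r = pochhammer 3 k * (f r - poly H r)"
    using Wr by (simp add: coeff_higher_pderiv numeral_3_eq_3 add.commute K_def)
  then show ?thesis
    using that abc \<open>degree ((pderiv ^^ k) P) \<le> 2\<close> by (simp add: W_def)
qed

lemma le_hermite_interp:
  assumes conc: "concave_on {lo<..<hi} ((deriv ^^ k) f)"
    and r: "r \<in> {lo..hi}" "0 < poly (node_poly S D) r"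
  shows "f r \<le> poly H r"
proof -
  have "r \<notin> S \<union> D"
    using r(2) poly_node_poly_eq_0_iff[OF S(1) D(1), of r] by auto
  then obtain a b c Q where abc: "lo < a" "a < b" "b < c" "c < hi" and Q: "degree Q \<le> 2"
      "coeff Q 2 * poly (node_poly S D) r = pochhammer 3 k * (f r - poly H r)"
      "\<forall>x\<in>{a, b, c}. (deriv ^^ k) f x = poly Q x"
    by (rule hermite_remainder_quadratic[OF r(1)])
  have "coeff Q 2 \<le> 0"
    by (rule concave_on_quadratic_contact[OF conc Q(1) _ _ abc(2,3) Q(3)]) (use abc in auto)
  then have "pochhammer 3 k * (f r - poly H r) \<le> 0"
    using Q(2) r(2) mult_nonpos_nonneg[of "coeff Q 2" "poly (node_poly S D) r"] by simp
  moreover have "0 < pochhammer (3::real) k"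
    by (rule pochhammer_pos) simp
  ultimately show ?thesis
    by (simp add: mult_le_0_iff)
qed

lemma less_hermite_interp:
  assumes conc: "strictly_concave_on {lo<..<hi} ((deriv ^^ k) f)"
    and r: "r \<in> {lo..hi}" "0 < poly (node_poly S D) r"
  shows "f r < poly H r"
proof -
  have "r \<notin> S \<union> D"
    using r(2) poly_node_poly_eq_0_iff[OF S(1) D(1), of r] by auto
  then obtain a b c Q where abc: "lo < a" "a < b" "b < c" "c < hi" and Q: "degree Q \<le> 2"
      "coeff Q 2 * poly (node_poly S D) r = pochhammer 3 k * (f r - poly H r)"
      "\<forall>x\<in>{a, b, c}. (deriv ^^ k) f x = poly Q x"
    by (rule hermite_remainder_quadratic[OF r(1)])
  have "coeff Q 2 < 0"
    by (rule strictly_concave_on_quadratic_contact[OF conc Q(1) _ _ abc(2,3) Q(3)]) (use abc in auto)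
  then have "pochhammer 3 k * (f r - poly H r) < 0"
    using Q(2) r(2) mult_neg_pos[of "coeff Q 2" "poly (node_poly S D) r"] by simp
  moreover have "0 < pochhammer (3::real) k"
    by (rule pochhammer_pos) simp
  ultimately show ?thesis
    by (simp add: mult_less_0_iff)
qed

end

text \<open>Simple node \<open>0\<close>, double nodes at \<open>R\<close>. Since \<open>f\<close> need not be differentiable at \<open>4\<close>,
  a distance \<open>4 \<in> R\<close> becomes a simple node instead, and to keep the degree the extra
  simple node \<open>s\<close> is placed above every other value of \<open>U\<close>, which keeps the node
  polynomial positive on \<open>U\<close>.\<close>

lemma hermite_nodes_for_distances:
  fixes R U :: "real set"
  assumes R: "finite R" "R \<subseteq> {0<..4}" and U: "finite U" "U \<subseteq> {0..4}"
  obtains S D where "finite S" "finite D" "S \<inter> D = {}" "S \<subseteq> {0..4}" "D \<subseteq> {0<..<4}"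
    "card S + 2 * card D = 2 * card R + 1" "insert 0 R \<subseteq> S \<union> D" "U \<inter> (S \<union> D) \<subseteq> insert 0 R"
    "\<forall>u\<in>U - (S \<union> D). 0 < poly (node_poly S D) u"
proof (cases "4 \<in> R")
  case False
  show ?thesis
  proof (rule that[of "{0}" R])
    show "R \<subseteq> {0<..<4}"
    proof
      fix r assume "r \<in> R"
      then have "0 < r" "r \<le> 4" "r \<noteq> 4"
        using R(2) False by auto
      then show "r \<in> {0<..<4}"
        by simp
    qed
    show "\<forall>u\<in>U - ({0} \<union> R). 0 < poly (node_poly {0} R) u"
    proof
      fix u assume u: "u \<in> U - ({0} \<union> R)"
      then have "0 < u"
        using U(2) by force
      moreover have "0 < (\<Prod>d\<in>R. (u - d)\<^sup>2)"
        using u by (intro prod_pos) auto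
      ultimately show "0 < poly (node_poly {0} R) u"
        using R(1) by (simp add: poly_node_poly)
    qed
  qed (use R in auto)
next
  case True
  define M where "M = Max (insert 0 ((R \<union> U) - {4}))"
  have "finite (insert 0 ((R \<union> U) - {4}))"
    using R(1) U(1) by simp
  then have M: "0 \<le> M" "M < 4" "\<forall>v\<in>(R \<union> U) - {4}. v \<le> M"
    using Max_in[of "insert 0 ((R \<union> U) - {4})"] R(2) U(2) by (auto simp: M_def)
  define s where "s = (M + 4) / 2"
  have s: "0 < s" "M < s" "s < 4"
    using M by (auto simp: s_def)
  have "s \<notin> R \<union> U"
    using M(3) s by force
  have "0 \<notin> R"
    using R(2) by auto
  show ?thesis
  proof (rule that[of "{0, s, 4}" "R - {4}"])
    have "card {0, s, 4::real} = 3"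
      using s by simp
    moreover have "card (R - {4}) + 1 = card R"
      using card_Suc_Diff1[OF R(1) True] by simp
    ultimately show "card {0, s, 4} + 2 * card (R - {4}) = 2 * card R + 1"
      by linarith
    show "\<forall>u\<in>U - ({0, s, 4} \<union> (R - {4})). 0 < poly (node_poly {0, s, 4} (R - {4})) u"
    proof
      fix u assume u: "u \<in> U - ({0, s, 4} \<union> (R - {4}))"
      then have "0 < u" "u \<le> M"
        using U(2) M(3) by force+
      then have "0 < u * ((u - s) * (u - 4))"
        using s by (simp add: mult_neg_neg)
      moreover have "0 < (\<Prod>d\<in>R - {4}. (u - d)\<^sup>2)"
        using u by (intro prod_pos) auto
      ultimately show "0 < poly (node_poly {0, s, 4} (R - {4})) u"
        using R(1) s by (simp add: poly_node_poly)
    qed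
    show "{0, s, 4} \<inter> (R - {4}) = {}"
      using \<open>0 \<notin> R\<close> \<open>s \<notin> R \<union> U\<close> by auto
    show "R - {4} \<subseteq> {0<..<4}"
      using R(2) by fastforce
    show "U \<inter> ({0, s, 4} \<union> (R - {4})) \<subseteq> insert 0 R"
      using \<open>s \<notin> R \<union> U\<close> True by auto
  qed (use R s True in auto)
qed

lemma hermite_majorant:
  fixes f :: "real \<Rightarrow> real" and R U :: "real set"
  assumes m: "1 \<le> m" and cont: "continuous_on {0..4} f"
    and diff: "\<forall>j < 2*m - 1. \<forall>t\<in>{0<..<4}. (deriv ^^ j) f differentiable (at t)"
    and conc: "concave_on {0<..<4} ((deriv ^^ (2*m - 1)) f)"
    and R: "finite R" "card R = m" "R \<subseteq> {0<..4}" and U: "finite U" "U \<subseteq> {0..4}"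
  obtains H where "degree H \<le> 2 * m" "\<forall>u\<in>insert 0 R. poly H u = f u" "\<forall>u\<in>U. f u \<le> poly H u"
    "strictly_concave_on {0<..<4} ((deriv ^^ (2*m - 1)) f) \<longrightarrow> (\<forall>u\<in>U - insert 0 R. f u < poly H u)"
proof -
  obtain S D where S: "finite S" "S \<subseteq> {0..4}" and D: "finite D" "D \<subseteq> {0<..<4}"
    and disj: "S \<inter> D = {}" and count: "card S + 2 * card D = 2 * m + 1"
    and nodes: "insert 0 R \<subseteq> S \<union> D" "U \<inter> (S \<union> D) \<subseteq> insert 0 R"
    and pos: "\<forall>u\<in>U - (S \<union> D). 0 < poly (node_poly S D) u"
    using hermite_nodes_for_distances[OF R(1,3) U] R(2) by metis
  obtain H where H: "hermite_interp f (deriv f) S D H" and "degree H \<le> card S + 2 * card D - 1"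
    using hermite_interp_exists[OF S(1) D(1) disj] .
  then have deg: "degree H \<le> (2 * m - 1) + 1"
    using count m by simp
  then have "degree H \<le> 2 * m"
    using m by simp
  have k: "1 \<le> 2 * m - 1" and count': "card S + 2 * card D = (2 * m - 1) + 2"
    using count m by simp_all
  note setting = k cont diff S D disj count' H deg
  have at_nodes: "poly H u = f u" if "u \<in> S \<union> D" for u
    using H that by (simp add: hermite_interp_def)
  show ?thesis
  proof (rule that)
    show "degree H \<le> 2 * m"
      by fact
    show "\<forall>u\<in>insert 0 R. poly H u = f u"
      using at_nodes nodes(1) by auto
    show "\<forall>u\<in>U. f u \<le> poly H u"
    proof
      fix u assume u: "u \<in> U"
      show "f u \<le> poly H u"
      proof (cases "u \<in> S \<union> D")
        case False
        then show ?thesis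
          using le_hermite_interp[OF setting conc] pos U(2) u by auto
      qed (simp add: at_nodes)
    qed
    show "strictly_concave_on {0<..<4} ((deriv ^^ (2*m - 1)) f) \<longrightarrow> (\<forall>u\<in>U - insert 0 R. f u < poly H u)"
    proof (intro impI ballI)
      fix u assume strict: "strictly_concave_on {0<..<4} ((deriv ^^ (2*m - 1)) f)"
        and u: "u \<in> U - insert 0 R"
      then have "u \<notin> S \<union> D"
        using nodes(2) by auto
      then show "f u < poly H u"
        using less_hermite_interp[OF setting strict] pos U(2) u by auto
    qed
  qed
qed

section \<open>Potentials of strongly sharp configurations\<close>

lemma power2_norm_diff_unit_le:
  fixes x y :: "'a::real_normed_vector"
  assumes "norm x = 1" "norm y = 1"
  shows "(norm (x - y))\<^sup>2 \<le> 4"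
proof -
  have "norm (x - y) \<le> 2"
    using norm_triangle_ineq4[of x y] assms by simp
  then show ?thesis
    using power_mono[of "norm (x - y)" 2 2] by simp
qed

lemma sharp_squared_distances:
  fixes \<omega> :: "(real^'n::finite) set"
  assumes "sharp m \<omega>"
  obtains R where "finite R" "card R = m" "R \<subseteq> {0<..4}"
    "\<forall>x\<in>\<omega>. \<forall>z\<in>\<omega>. x \<noteq> z \<longrightarrow> (norm (x - z))\<^sup>2 \<in> R"
proof
  define T where "T = {x \<bullet> y | x y. x \<in> \<omega> \<and> y \<in> \<omega> \<and> x \<noteq> y}"
  have \<omega>: "finite \<omega>" "\<omega> \<subseteq> sphere 0 1" and "card T = m"
    using assms by (auto simp: sharp_def spherical_design_def T_def)
  have "T \<subseteq> (\<lambda>(x, y). x \<bullet> y) ` (\<omega> \<times> \<omega>)"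
    by (auto simp: T_def)
  then have "finite T"
    using \<omega>(1) finite_subset by blast
  let ?R = "(\<lambda>t. 2 - 2 * t) ` T"
  show "finite ?R"
    using \<open>finite T\<close> by simp
  show "card ?R = m"
    using \<open>card T = m\<close> by (subst card_image) (auto simp: inj_on_def)
  have dist: "(norm (x - z))\<^sup>2 = 2 - 2 * (x \<bullet> z)" if "x \<in> \<omega>" "z \<in> \<omega>" for x z
    using that \<omega>(2) by (intro norm_diff_sq_unit) auto
  show "\<forall>x\<in>\<omega>. \<forall>z\<in>\<omega>. x \<noteq> z \<longrightarrow> (norm (x - z))\<^sup>2 \<in> ?R"
    using dist by (auto simp: T_def)
  show "?R \<subseteq> {0<..4}"
  proof
    fix r assume "r \<in> ?R"
    then obtain x z where xz: "x \<in> \<omega>" "z \<in> \<omega>" "x \<noteq> z" "r = (norm (x - z))\<^sup>2"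
      using dist by (auto simp: T_def)
    moreover have "norm x = 1" "norm z = 1"
      using \<omega>(2) xz(1,2) by auto
    ultimately show "r \<in> {0<..4}"
      using power2_norm_diff_unit_le[of x z] by auto
  qed
qed

lemma potential_eq_interpolant_sum:
  fixes \<omega> :: "(real^'n::finite) set"
  assumes des: "spherical_design (2 * m) \<omega>"
    and R: "\<forall>x\<in>\<omega>. \<forall>z\<in>\<omega>. x \<noteq> z \<longrightarrow> (norm (x - z))\<^sup>2 \<in> R"
    and H: "degree H \<le> 2 * m" "\<forall>u\<in>insert 0 R. poly H u = f u"
    and y: "norm y = 1" and x0: "x0 \<in> \<omega>"
  shows "(\<Sum>x\<in>\<omega>. poly H ((norm (y - x))\<^sup>2)) = potential f \<omega> x0"
proof -
  have "norm x0 = 1"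
    using des x0 by (auto simp: spherical_design_def)
  then have "(\<Sum>x\<in>\<omega>. poly H ((norm (y - x))\<^sup>2)) = (\<Sum>x\<in>\<omega>. poly H ((norm (x0 - x))\<^sup>2))"
    by (rule spherical_design_distance_sum_eq[OF des H(1) y])
  also have "\<dots> = potential f \<omega> x0"
    unfolding potential_def
  proof (rule sum.cong)
    fix x assume "x \<in> \<omega>"
    then have "(norm (x0 - x))\<^sup>2 \<in> insert 0 R"
      using R x0 by (cases "x = x0") auto
    then show "poly H ((norm (x0 - x))\<^sup>2) = f ((norm (x0 - x))\<^sup>2)"
      using H(2) by blast
  qed simp
  finally show ?thesis .
qed

context
  fixes f :: "real \<Rightarrow> real" and m :: nat and \<omega> :: "(real^'n::finite) set" and R :: "real set"
  assumes m: "1 \<le> m" and cont: "continuous_on {0..4} f"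
    and diff: "\<forall>j < 2*m - 1. \<forall>t\<in>{0<..<4}. (deriv ^^ j) f differentiable (at t)"
    and conc: "concave_on {0<..<4} ((deriv ^^ (2*m - 1)) f)"
    and des: "spherical_design (2*m) \<omega>"
    and R: "finite R" "card R = m" "R \<subseteq> {0<..4}" "\<forall>x\<in>\<omega>. \<forall>z\<in>\<omega>. x \<noteq> z \<longrightarrow> (norm (x - z))\<^sup>2 \<in> R"
begin

lemma squared_distances_from_finite_bounded:
  assumes "norm y = 1"
  shows "finite ((\<lambda>x. (norm (y - x))\<^sup>2) ` \<omega>)" "(\<lambda>x. (norm (y - x))\<^sup>2) ` \<omega> \<subseteq> {0..4}"
  using des assms power2_norm_diff_unit_le[of y] by (auto simp: spherical_design_def)

lemma potential_le_at_design_point: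
  assumes y: "norm y = 1" and x0: "x0 \<in> \<omega>"
  shows "potential f \<omega> y \<le> potential f \<omega> x0"
proof -
  obtain H where H: "degree H \<le> 2 * m" "\<forall>u\<in>insert 0 R. poly H u = f u"
      "\<forall>u\<in>(\<lambda>x. (norm (y - x))\<^sup>2) ` \<omega>. f u \<le> poly H u"
    by (rule hermite_majorant[OF m cont diff conc R(1-3) squared_distances_from_finite_bounded[OF y]])
  have "potential f \<omega> y \<le> (\<Sum>x\<in>\<omega>. poly H ((norm (y - x))\<^sup>2))"
    unfolding potential_def using H(3) by (intro sum_mono) auto
  also have "\<dots> = potential f \<omega> x0"
    by (rule potential_eq_interpolant_sum[OF des R(4) H(1,2) y x0])
  finally show ?thesis .
qed

lemma potential_less_at_design_point:
  assumes strict: "strictly_concave_on {0<..<4} ((deriv ^^ (2*m - 1)) f)"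
    and y: "norm y = 1" "y \<notin> \<omega>" and x0: "x0 \<in> \<omega>"
  shows "potential f \<omega> y < potential f \<omega> x0"
proof -
  obtain H where H: "degree H \<le> 2 * m" "\<forall>u\<in>insert 0 R. poly H u = f u"
      "\<forall>u\<in>(\<lambda>x. (norm (y - x))\<^sup>2) ` \<omega>. f u \<le> poly H u"
      "strictly_concave_on {0<..<4} ((deriv ^^ (2*m - 1)) f) \<longrightarrow>
        (\<forall>u\<in>(\<lambda>x. (norm (y - x))\<^sup>2) ` \<omega> - insert 0 R. f u < poly H u)"
    by (rule hermite_majorant[OF m cont diff conc R(1-3) squared_distances_from_finite_bounded[OF y(1)]])
  have "0 \<notin> R" "spherical_design (2 * card R) \<omega>"
    using R(2,3) des by auto
  then obtain x1 where x1: "x1 \<in> \<omega>" "(norm (y - x1))\<^sup>2 \<notin> R"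
    using spherical_design_distances_not_within[OF _ R(1) _ y(1)] by blast
  moreover have "(norm (y - x1))\<^sup>2 \<noteq> 0"
    using x1(1) y(2) by auto
  ultimately have "f ((norm (y - x1))\<^sup>2) < poly H ((norm (y - x1))\<^sup>2)"
    using H(4) strict by blast
  then have "potential f \<omega> y < (\<Sum>x\<in>\<omega>. poly H ((norm (y - x))\<^sup>2))"
    unfolding potential_def using des H(3) x1(1)
    by (intro sum_strict_mono_ex1) (auto simp: spherical_design_def)
  also have "\<dots> = potential f \<omega> x0"
    by (rule potential_eq_interpolant_sum[OF des R(4) H(1,2) y(1) x0])
  finally show ?thesis .
qed

end

theorem theorem2p3:
  fixes f :: "real \<Rightarrow> real" and m :: nat and \<omega> :: "(real^'n) set"
  assumes "m \<ge> 1" and "CARD('n) \<ge> 2"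
    and "continuous_on {0..4} f"
    and "\<forall>j < 2*m - 1. \<forall>t\<in>{0<..<4}. (deriv ^^ j) f differentiable (at t)"
    and "concave_on {0<..<4} ((deriv ^^ (2*m - 1)) f)"
    and "strongly_sharp m \<omega>"
  shows "(\<forall>x\<in>\<omega>. \<forall>y\<in>sphere 0 1. potential f \<omega> y \<le> potential f \<omega> x) \<and>
         (strictly_concave_on {0<..<4} ((deriv ^^ (2*m - 1)) f) \<longrightarrow>
           (\<forall>y\<in>sphere 0 1. (\<forall>z\<in>sphere 0 1. potential f \<omega> z \<le> potential f \<omega> y) \<longrightarrow> y \<in> \<omega>))"
proof -
  have des: "spherical_design (2*m) \<omega>" and "sharp m \<omega>"
    using assms(6) by (simp_all add: strongly_sharp_def)
  obtain R where R: "finite R" "card R = m" "R \<subseteq> {0<..4}"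
      "\<forall>x\<in>\<omega>. \<forall>z\<in>\<omega>. x \<noteq> z \<longrightarrow> (norm (x - z))\<^sup>2 \<in> R"
    using sharp_squared_distances[OF \<open>sharp m \<omega>\<close>] by blast
  note le = potential_le_at_design_point[OF assms(1,3,4,5) des R]
  note less = potential_less_at_design_point[OF assms(1,3,4,5) des R]
  obtain x0 where x0: "x0 \<in> \<omega>"
    using des by (auto simp: spherical_design_def)
  show ?thesis
  proof (intro conjI impI ballI)
    fix x y :: "real^'n" assume "x \<in> \<omega>" "y \<in> sphere 0 1"
    then show "potential f \<omega> y \<le> potential f \<omega> x"
      using le by simp
  next
    fix y :: "real^'n"
    assume strict: "strictly_concave_on {0<..<4} ((deriv ^^ (2*m - 1)) f)" and y: "y \<in> sphere 0 1"
      and maximal: "\<forall>z\<in>sphere 0 1. potential f \<omega> z \<le> potential f \<omega> y"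
    have "potential f \<omega> x0 \<le> potential f \<omega> y"
      using maximal des x0 by (auto simp: spherical_design_def)
    then show "y \<in> \<omega>"
      using less[OF strict _ _ x0] y by force
  qed
qed

end
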